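(* Let $k\ge2$, $n,m\ge0$, and $M=k^m$. Let $F$ be a strategy for $k^n$ labeled chips at the root whose stable configuration is the permutation $\tau\in S_{k^n}$, and for each $i\in\{1,\dots,k^n\}$ let $F_i$ be a strategy for $k^m$ labeled chips at the root whose stable configuration is $\gamma_i\in S_{k^m}$. Start with $k^{n+m}$ chips labeled $1,\dots,k^{n+m}$ at the root. First perform the $F$-bundle with $M$ groups: for each $j\in\{1,\dots,M\}$, apply $F$ (via order-isomorphism) to the group of chips $\{j, M+j, 2M+j,\dots,(k^n-1)M+j\}$, using only vertices on layers $1,\dots,n$. Then, for each $i$, apply $F_i$ (via order-isomorphism, transported to the subtree) to the $k^m$ chips now on the $i$-th leftmost vertex of layer $n+1$, within the subtree rooted at that vertex. Then the resulting stable configuration is the inflation $\tau[\gamma_1,\dots,\gamma_{k^n}]$.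
   Context: Labeled chip-firing on the infinite rooted directed $k$-ary tree (each vertex has $k$ children ordered left to right, root on layer $1$, children of a layer-$t$ vertex on layer $t+1$): a vertex with at least $k$ chips may fire by choosing any $k$ of its chips and sending the $i$-th smallest label among them to its $i$-th leftmost child. A strategy is a sequence of legal firings continued until the configuration is stable (no vertex has $\ge k$ chips). Starting with $k^p$ chips at the root, every stable configuration has exactly one chip on each vertex of layer $p+1$ and none elsewhere, and is identified with the permutation (or, for arbitrary distinct labels, the sequence) of labels read from left to right on layer $p+1$. Since firing depends only on the relative order of labels, a strategy for chips $1,\dots,N$ can be applied to any set of $N$ distinct labels by letting the chip with the $r$-th smallest label play the role of chip $r$ (application via order-isomorphism); similarly a strategy at the root can be transported to the same firings in the subtree rooted at any vertex. Inflation: for $\tau\in S_n$ and permutations $\gamma_1,\dots,\gamma_n$, the inflation $\tau[\gamma_1,\dots,\gamma_n]$ is the permutation of length $|\gamma_1|+\cdots+|\gamma_n|$ consisting of $n$ consecutive blocks, where the $i$-th block is order-isomorphic to $\gamma_i$ and every choice of one entry from each block yields a sequence order-isomorphic to $\tau$. *)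

theory Defs
  imports Main
begin

text \<open>Vertices of the infinite rooted directed k-ary tree are paths from the root:
  lists of child indices (each < k).  The root is [] (layer 1); a vertex v lies on
  layer length v + 1; the i-th leftmost child (0-based i) of v is v @ [i].\<close>

type_synonym vertex = "nat list"
type_synonym config = "vertex \<Rightarrow> nat set"
type_synonym firing = "vertex \<times> nat set"   \<comment> \<open>vertex that fires, the k chips chosen\<close>

definition init_config :: "nat \<Rightarrow> config" where
  "init_config N = (\<lambda>u. if u = [] then {1..N} else {})"

text \<open>Firing v with the chosen k-set S: the i-th smallest label of S (0-based i)
  goes to the i-th leftmost child v @ [i].\<close>
definition fire :: "nat \<Rightarrow> config \<Rightarrow> vertex \<Rightarrow> nat set \<Rightarrow> config" where
  "fire k C v S = (\<lambda>u.
     if u = v then C v - S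
     else if length u = Suc (length v) \<and> take (length v) u = v \<and> last u < k
       then insert (sorted_list_of_set S ! last u) (C u)
     else C u)"

fun run :: "nat \<Rightarrow> config \<Rightarrow> firing list \<Rightarrow> config option" where
  "run k C [] = Some C"
| "run k C ((v, S) # fs) =
     (if S \<subseteq> C v \<and> card S = k then run k (fire k C v S) fs else None)"

definition stable :: "nat \<Rightarrow> config \<Rightarrow> bool" where
  "stable k C \<longleftrightarrow> (\<forall>v. finite (C v) \<and> card (C v) < k)"

text \<open>The i-th leftmost vertex (0-based i < k^p) of layer p+1: base-k digits of i.\<close>
fun vtx :: "nat \<Rightarrow> nat \<Rightarrow> nat \<Rightarrow> vertex" where
  "vtx k 0 i = []"
| "vtx k (Suc p) i = (i div k ^ p) # vtx k p (i mod k ^ p)"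

text \<open>The configuration with exactly one chip on each vertex of layer p+1, the labels
  read left to right being \<sigma> 1, ..., \<sigma> (k^p), and no chips elsewhere.\<close>
definition conf_of_seq :: "nat \<Rightarrow> nat \<Rightarrow> (nat \<Rightarrow> nat) \<Rightarrow> config" where
  "conf_of_seq k p \<sigma> = (\<lambda>u. {\<sigma> (i + 1) | i. i < k ^ p \<and> u = vtx k p i})"

definition strategy_result :: "nat \<Rightarrow> nat \<Rightarrow> firing list \<Rightarrow> (nat \<Rightarrow> nat) \<Rightarrow> bool" where
  "strategy_result k p F \<sigma> \<longleftrightarrow>
     (\<exists>C. run k (init_config (k ^ p)) F = Some C \<and> stable k C \<and> C = conf_of_seq k p \<sigma>)"

text \<open>Application via order-isomorphism to a label set L: the chip with the r-th
  smallest label of L plays the role of chip r.\<close>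
definition relabel :: "nat set \<Rightarrow> firing list \<Rightarrow> firing list" where
  "relabel L F = map (\<lambda>(v, S). (v, (\<lambda>r. sorted_list_of_set L ! (r - 1)) ` S)) F"

definition transport :: "vertex \<Rightarrow> firing list \<Rightarrow> firing list" where
  "transport w F = map (\<lambda>(v, S). (w @ v, S)) F"

text \<open>The F-bundle with M groups (N = number of chips F is designed for):
  F applied successively to the groups {j, M+j, ..., (N-1)M+j}, j = 1..M.\<close>
definition f_bundle :: "nat \<Rightarrow> nat \<Rightarrow> firing list \<Rightarrow> firing list" where
  "f_bundle N M F = concat (map (\<lambda>j. relabel {t * M + j | t. t < N} F) [1..<M + 1])"

text \<open>Inflation \<tau>[\<gamma>_1, ..., \<gamma>_n] when every \<gamma>_b has length L:
  position i lies in block b = (i-1) div L + 1 at offset r = (i-1) mod L + 1.\<close>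
definition inflation :: "nat \<Rightarrow> (nat \<Rightarrow> nat) \<Rightarrow> (nat \<Rightarrow> nat \<Rightarrow> nat) \<Rightarrow> nat \<Rightarrow> nat" where
  "inflation L \<tau> \<gamma> i =
     (\<tau> ((i - 1) div L + 1) - 1) * L + \<gamma> ((i - 1) div L + 1) ((i - 1) mod L + 1)"

end

theory Submission
  imports Defs "HOL-Library.Disjoint_Sets"
begin

text \<open>Both phases are instances of one simulation principle. Firing only compares labels, so
  running a strategy on a strictly monotone relabelling of its chips, inside the subtree rooted
  at w, yields the correspondingly relabelled and transported configuration; and runs on pairwise
  disjoint label ranges do not interfere. In the bundle, group j consists of the labels
  (r - 1) M + j, so afterwards the i-th vertex of layer n + 1 holds exactly the block
  {(\<tau> i - 1) M + 1, ..., \<tau> i M}. The second phase then writes \<gamma> i, shifted by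
  (\<tau> i - 1) M, below that vertex, which is the inflation.\<close>

lemma block_offset_eq_iff:
  fixes a b r s M :: nat
  assumes "r \<in> {1..M}" "s \<in> {1..M}"
  shows "a * M + r = b * M + s \<longleftrightarrow> a = b \<and> r = s"
proof
  assume eq: "a * M + r = b * M + s"
  have "a * M + (r - 1) = b * M + (s - 1)" "r - 1 < M" "s - 1 < M"
    using assms eq by auto
  then have "r - 1 = s - 1"
    by (metis mod_mult_self3 mod_less)
  moreover from this have "a * M = b * M" using \<open>a * M + (r - 1) = b * M + (s - 1)\<close> by simp
  ultimately have "a = b \<and> r - 1 = s - 1" using \<open>r - 1 < M\<close> by simp
  then show "a = b \<and> r = s" using assms by auto
qed simp

lemma atLeastAtMost_mult_eq_UN_block_offsets:
  fixes N M :: nat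
  shows "{1..N * M} = (\<Union>j\<in>{1..M}. (\<lambda>r. (r - 1) * M + j) ` {1..N})"
proof (intro equalityI subsetI)
  fix x assume x: "x \<in> {1..N * M}"
  then have "0 < M" by (cases "M = 0") auto
  moreover have "(x - 1) div M < N" using x by (auto simp: less_mult_imp_div_less)
  ultimately have "(x - 1) div M + 1 \<in> {1..N}" "(x - 1) mod M + 1 \<in> {1..M}"
    by (auto simp: Suc_le_eq)
  moreover have "x = ((x - 1) div M + 1 - 1) * M + ((x - 1) mod M + 1)" using x by simp
  ultimately show "x \<in> (\<Union>j\<in>{1..M}. (\<lambda>r. (r - 1) * M + j) ` {1..N})" by blast
next
  fix x assume "x \<in> (\<Union>j\<in>{1..M}. (\<lambda>r. (r - 1) * M + j) ` {1..N})"
  then obtain r j where rj: "r \<in> {1..N}" "j \<in> {1..M}" "x = (r - 1) * M + j" by auto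
  then have "x \<le> (r - 1) * M + M" by simp
  also have "\<dots> = r * M" using rj by (cases r) auto
  also have "\<dots> \<le> N * M" using rj by simp
  finally show "x \<in> {1..N * M}" using rj by simp
qed

lemma set_upt_Suc_atLeastAtMost: "set [1..<M + 1] = {1..M}"
  by auto

lemma inj_on_diff_1:
  fixes \<tau> :: "'a \<Rightarrow> nat"
  assumes "inj_on \<tau> A" "\<tau> ` A \<subseteq> {1..}"
  shows "inj_on (\<lambda>i. \<tau> i - 1) A"
proof (rule inj_onI)
  fix i j assume ij: "i \<in> A" "j \<in> A" "\<tau> i - 1 = \<tau> j - 1"
  moreover have "1 \<le> \<tau> i" "1 \<le> \<tau> j" using assms(2) ij(1,2) by auto
  ultimately have "\<tau> i = \<tau> j" by simp
  then show "i = j" using inj_onD[OF assms(1)] ij(1,2) by blast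
qed

lemma sorted_list_of_set_image_strict_mono:
  assumes "strict_mono_on A f" "S \<subseteq> A" "finite S"
  shows "sorted_list_of_set (f ` S) = map f (sorted_list_of_set S)"
proof -
  let ?l = "sorted_list_of_set S"
  have "sorted_wrt (<) ?l" "set ?l \<subseteq> A" using assms by simp_all
  then have "sorted_wrt (\<lambda>x y. f x < f y) ?l"
    using sorted_wrt_mono_rel[of ?l "(<)" "\<lambda>x y. f x < f y"] assms(1)
    by (metis (no_types, lifting) strict_mono_onD subsetD)
  moreover have "inj_on f S"
    using assms strict_mono_on_imp_inj_on inj_on_subset by blast
  ultimately show ?thesis
    using sorted_list_of_set_unique[of "f ` S" "map f ?l"] assms(3)
    by (simp add: sorted_wrt_map card_image)
qed

lemma nth_sorted_list_of_set_image_atLeastAtMost: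
  assumes "strict_mono_on {1..L} f" "r \<in> {1..L}"
  shows "sorted_list_of_set (f ` {1..L}) ! (r - 1) = f r"
proof -
  have "sorted_list_of_set {1..L} = [1..<Suc L]"
    by (metis atLeastLessThanSuc_atLeastAtMost sorted_list_of_set_range)
  then show ?thesis
    using sorted_list_of_set_image_strict_mono[OF assms(1) order_refl] assms(2)
    by (cases r) (auto simp del: upt_Suc)
qed

lemma run_append:
  "run k C (xs @ ys) = (case run k C xs of None \<Rightarrow> None | Some C' \<Rightarrow> run k C' ys)"
  by (induction xs arbitrary: C) auto

lemma run_labels_subset:
  assumes "run k C F = Some C'" "\<And>v. C v \<subseteq> A"
  shows "C' v \<subseteq> A"
  using assms
proof (induction F arbitrary: C)
  case (Cons a F)
  obtain w S where a: "a = (w, S)" by force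
  with Cons.prems have S: "S \<subseteq> C w" "card S = k" and run: "run k (fire k C w S) F = Some C'"
    by (auto split: if_splits)
  have "sorted_list_of_set S ! i \<in> A" if "i < k" for i
  proof -
    have "finite S" using S that by (metis card.infinite not_less_zero)
    then have "sorted_list_of_set S ! i \<in> S"
      using S that by (metis length_sorted_list_of_set nth_mem set_sorted_list_of_set)
    then show ?thesis using S Cons.prems(2) by blast
  qed
  then have "fire k C w S u \<subseteq> A" for u
    using Cons.prems(2) by (auto simp: fire_def)
  then show ?case using Cons.IH run by blast
qed simp

lemma fire_outside_subtree:
  assumes "take (length w) u \<noteq> w"
  shows "fire k C (w @ v) S u = C u"
proof -
  have "take (length w) (take (length (w @ v)) u) = take (length w) u"
    by (simp add: min_def)
  then have "take (length (w @ v)) u \<noteq> w @ v" using assms by (metis append_eq_conv_conj)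
  moreover have "u \<noteq> w @ v" using assms by auto
  ultimately show ?thesis by (simp add: fire_def)
qed

definition embed_config :: "(nat \<Rightarrow> nat) \<Rightarrow> vertex \<Rightarrow> config \<Rightarrow> config" where
  "embed_config f w C = (\<lambda>u. if take (length w) u = w then f ` C (drop (length w) u) else {})"

lemma embed_config_Nil [simp]: "embed_config f [] C u = f ` C u"
  by (simp add: embed_config_def)

lemma embed_config_init_config:
  "embed_config f w (init_config N) u = (if u = w then f ` {1..N} else {})"
  by (auto simp: embed_config_def init_config_def)

lemma embed_config_subset: "(\<And>v. C v \<subseteq> A) \<Longrightarrow> embed_config f w C u \<subseteq> f ` A"
  by (auto simp: embed_config_def)

definition embed_firings :: "(nat \<Rightarrow> nat) \<Rightarrow> vertex \<Rightarrow> firing list \<Rightarrow> firing list" where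
  "embed_firings f w F = map (\<lambda>(v, S). (w @ v, f ` S)) F"

lemma relabel_eq_embed_firings:
  "relabel L F = embed_firings (\<lambda>r. sorted_list_of_set L ! (r - 1)) [] F"
  by (simp add: relabel_def embed_firings_def case_prod_beta)

lemma transport_relabel:
  "transport w (relabel L F) = embed_firings (\<lambda>r. sorted_list_of_set L ! (r - 1)) w F"
  by (simp add: transport_def relabel_def embed_firings_def case_prod_beta)

lemma fire_embed_config:
  assumes S: "S \<subseteq> C v" "card S = k" and A: "\<And>v. C v \<subseteq> A" and f: "strict_mono_on A f"
    and B: "\<And>u. B u \<inter> f ` A = {}"
  shows "fire k (\<lambda>u. B u \<union> embed_config f w C u) (w @ v) (f ` S)
       = (\<lambda>u. B u \<union> embed_config f w (fire k C v S) u)"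
proof
  fix u
  show "fire k (\<lambda>u. B u \<union> embed_config f w C u) (w @ v) (f ` S) u
      = B u \<union> embed_config f w (fire k C v S) u"
  proof (cases "take (length w) u = w")
    case False
    then show ?thesis by (simp add: fire_outside_subtree embed_config_def)
  next
    case True
    then obtain x where u: "u = w @ x" by (metis append_take_drop_id)
    have SA: "S \<subseteq> A" using S A by blast
    have inj: "inj_on f A" using f strict_mono_on_imp_inj_on by blast
    consider "x = v" | "length x = Suc (length v) \<and> take (length v) x = v \<and> last x < k"
      | "x \<noteq> v" "\<not> (length x = Suc (length v) \<and> take (length v) x = v \<and> last x < k)"
      by auto
    then show ?thesis
    proof cases
      case 1
      have "f ` (C v - S) = f ` C v - f ` S"
        using inj_on_image_set_diff[OF inj] A SA by blast
      moreover have "B u \<inter> f ` S = {}" using B[of u] SA by blast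
      ultimately have "(B u \<union> f ` C v) - f ` S = B u \<union> f ` (C v - S)" by blast
      then show ?thesis using 1 u by (simp add: fire_def embed_config_def)
    next
      case 2
      then have "finite S" "x \<noteq> v" "last (w @ x) = last x"
        using S by (auto intro: card_ge_0_finite simp: last_append)
      moreover have "sorted_list_of_set (f ` S) = map f (sorted_list_of_set S)"
        using sorted_list_of_set_image_strict_mono[OF f SA] \<open>finite S\<close> .
      ultimately show ?thesis
        using 2 u S by (simp add: fire_def embed_config_def)
    next
      case 3
      then show ?thesis using u by (cases "x = []") (auto simp: fire_def embed_config_def)
    qed
  qed
qed

text \<open>The background B, untouched because it shares no labels with the embedded run, is what
  allows independent embedded runs to be composed.\<close>

lemma run_embed_config:
  assumes "run k C F = Some C'" "\<And>v. C v \<subseteq> A" "strict_mono_on A f"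
    and "\<And>x. x \<in> A \<Longrightarrow> f' x = f x" "\<And>u. B u \<inter> f ` A = {}"
  shows "run k (\<lambda>u. B u \<union> embed_config f w C u) (embed_firings f' w F)
       = Some (\<lambda>u. B u \<union> embed_config f w C' u)"
  using assms(1,2)
proof (induction F arbitrary: C)
  case (Cons a F)
  obtain v S where a: "a = (v, S)" by force
  with Cons.prems have S: "S \<subseteq> C v" "card S = k" and run: "run k (fire k C v S) F = Some C'"
    by (auto split: if_splits)
  have SA: "S \<subseteq> A" using S Cons.prems(2) by blast
  then have "f' ` S = f ` S" using assms(4) by (auto intro!: image_cong)
  moreover have "card (f ` S) = k"
    using S SA assms(3) strict_mono_on_imp_inj_on by (metis card_image inj_on_subset)
  moreover have "f ` S \<subseteq> B (w @ v) \<union> embed_config f w C (w @ v)"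
    using S by (auto simp: embed_config_def)
  moreover have "fire k C v S u \<subseteq> A" for u
    using run_labels_subset[of k C "[(v, S)]"] S Cons.prems(2) by simp
  ultimately show ?case
    using a fire_embed_config[of S C v k A f B w, OF S Cons.prems(2) assms(3,5)] Cons.IH[OF run]
    by (simp add: embed_firings_def)
qed (simp add: embed_firings_def)

lemma run_embed_config_blocks:
  assumes "distinct js"
    and "\<And>j. j \<in> set js \<Longrightarrow> run k (C j) (G j) = Some (C' j)"
    and "\<And>j v. j \<in> set js \<Longrightarrow> C j v \<subseteq> A j"
    and "\<And>j. j \<in> set js \<Longrightarrow> strict_mono_on (A j) (f j)"
    and "\<And>j x. j \<in> set js \<Longrightarrow> x \<in> A j \<Longrightarrow> f' j x = f j x"
    and "disjoint_family_on (\<lambda>j. f j ` A j) (set js)"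
    and "\<And>j u. j \<in> set js \<Longrightarrow> B u \<inter> f j ` A j = {}"
  shows "run k (\<lambda>u. B u \<union> (\<Union>j\<in>set js. embed_config (f j) (w j) (C j) u))
           (concat (map (\<lambda>j. embed_firings (f' j) (w j) (G j)) js))
       = Some (\<lambda>u. B u \<union> (\<Union>j\<in>set js. embed_config (f j) (w j) (C' j) u))"
  using assms
proof (induction js arbitrary: B)
  case (Cons j js)
  let ?rest = "\<lambda>D u. \<Union>i\<in>set js. embed_config (f i) (w i) (D i) u"
  have disjoint: "f i ` A i \<inter> f j ` A j = {}" if "i \<in> set js" for i
    using Cons.prems(1,6) that by (intro disjoint_family_onD[of _ "set (j # js)"]) auto
  have "?rest C u \<inter> f j ` A j = {}" for u
    using embed_config_subset[OF Cons.prems(3)] disjoint by fastforce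
  then have "(B u \<union> ?rest C u) \<inter> f j ` A j = {}" for u
    using Cons.prems(7)[of j u] by auto
  then have first: "run k (\<lambda>u. (B u \<union> ?rest C u) \<union> embed_config (f j) (w j) (C j) u)
      (embed_firings (f' j) (w j) (G j))
    = Some (\<lambda>u. (B u \<union> ?rest C u) \<union> embed_config (f j) (w j) (C' j) u)"
    by (intro run_embed_config[of k "C j" "G j" "C' j" "A j"])
      (use Cons.prems(2-5) in auto)
  have "embed_config (f j) (w j) (C' j) u \<inter> f i ` A i = {}" if "i \<in> set js" for i u
    using embed_config_subset[OF run_labels_subset[OF Cons.prems(2) Cons.prems(3)]] disjoint[OF that]
    by fastforce
  then have "(B u \<union> embed_config (f j) (w j) (C' j) u) \<inter> f i ` A i = {}" if "i \<in> set js" for i u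
    using Cons.prems(7)[of i u] that by auto
  then have rest: "run k (\<lambda>u. (B u \<union> embed_config (f j) (w j) (C' j) u) \<union> ?rest C u)
      (concat (map (\<lambda>j. embed_firings (f' j) (w j) (G j)) js))
    = Some (\<lambda>u. (B u \<union> embed_config (f j) (w j) (C' j) u) \<union> ?rest C' u)"
    using Cons.prems(1-6) by (intro Cons.IH) (auto simp: disjoint_family_on_def)
  show ?case
    using first rest by (simp add: run_append Un_ac)
qed simp

lemma run_f_bundle:
  assumes "run k (init_config N) F = Some C" "0 < M"
  shows "run k (init_config (N * M)) (f_bundle N M F)
       = Some (\<lambda>u. \<Union>j\<in>{1..M}. (\<lambda>r. (r - 1) * M + j) ` C u)"
proof -
  define h where "h j r = (r - 1) * M + j" for j r :: nat
  have group: "{t * M + j | t. t < N} = h j ` {1..N}" for j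
  proof (intro equalityI subsetI)
    fix x assume "x \<in> {t * M + j | t. t < N}"
    then obtain t where "t < N" "x = h j (t + 1)" by (auto simp: h_def)
    then show "x \<in> h j ` {1..N}" by force
  next
    fix x assume "x \<in> h j ` {1..N}"
    then obtain r where "r \<in> {1..N}" "x = (r - 1) * M + j" by (auto simp: h_def)
    then show "x \<in> {t * M + j | t. t < N}" by (intro CollectI exI[of _ "r - 1"]) auto
  qed
  have mono: "strict_mono_on {1..N} (h j)" for j
    unfolding strict_mono_on_def h_def using assms(2) by auto
  have lookup: "sorted_list_of_set {t * M + j | t. t < N} ! (r - 1) = h j r" if "r \<in> {1..N}" for j r
    using nth_sorted_list_of_set_image_atLeastAtMost[OF mono that] by (simp add: group)
  have "h i r = h j s \<longleftrightarrow> i = j \<and> r = s" if "i \<in> {1..M}" "j \<in> {1..M}" "r \<in> {1..N}" "s \<in> {1..N}"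
    for i j r s
    using block_offset_eq_iff[OF that(1,2), of "r - 1" "s - 1"] that by (auto simp: h_def)
  then have disjoint: "disjoint_family_on (\<lambda>j. h j ` {1..N}) (set [1..<M + 1])"
    unfolding disjoint_family_on_def set_upt_Suc_atLeastAtMost by blast
  define g where "g j = (\<lambda>r. sorted_list_of_set {t * M + j | t. t < N} ! (r - 1))" for j
  have "run k (\<lambda>u. {} \<union> (\<Union>j\<in>set [1..<M + 1]. embed_config (h j) [] (init_config N) u))
      (concat (map (\<lambda>j. embed_firings (g j) [] F) [1..<M + 1]))
    = Some (\<lambda>u. {} \<union> (\<Union>j\<in>set [1..<M + 1]. embed_config (h j) [] C u))"
    by (rule run_embed_config_blocks[OF _ _ _ mono _ disjoint])
      (use assms(1) lookup in \<open>auto simp: init_config_def g_def\<close>)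
  moreover have "(\<lambda>u. {} \<union> (\<Union>j\<in>set [1..<M + 1]. embed_config (h j) [] (init_config N) u))
      = init_config (N * M)"
    unfolding set_upt_Suc_atLeastAtMost init_config_def atLeastAtMost_mult_eq_UN_block_offsets
    by (intro ext) (simp add: h_def)
  moreover have "concat (map (\<lambda>j. embed_firings (g j) [] F) [1..<M + 1]) = f_bundle N M F"
    by (simp add: f_bundle_def relabel_eq_embed_firings g_def)
  ultimately show ?thesis
    unfolding set_upt_Suc_atLeastAtMost by (simp add: h_def)
qed

lemma run_transported_strategies:
  fixes w :: "nat \<Rightarrow> vertex" and c :: "nat \<Rightarrow> nat"
  assumes "inj_on w {1..N}" "inj_on c {1..N}"
    and "\<And>i. i \<in> {1..N} \<Longrightarrow> run k (init_config M) (Fs i) = Some (D i)"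
    and C: "\<And>u. C u = (\<Union>i\<in>{1..N}. if u = w i then (\<lambda>r. c i * M + r) ` {1..M} else {})"
  shows "run k C (concat (map (\<lambda>i. transport (w i) (relabel (C (w i)) (Fs i))) [1..<N + 1]))
       = Some (\<lambda>u. \<Union>i\<in>{1..N}. embed_config (\<lambda>r. c i * M + r) (w i) (D i) u)"
proof -
  define f where "f i = (\<lambda>r. c i * M + r)" for i
  have mono: "strict_mono_on {1..M} (f i)" for i
    by (simp add: strict_mono_on_def f_def)
  have "C (w i) = f i ` {1..M}" if "i \<in> {1..N}" for i
    using C[of "w i"] that inj_onD[OF assms(1) _ that] by (auto simp: f_def split: if_splits)
  then have lookup: "sorted_list_of_set (C (w i)) ! (r - 1) = f i r" if "i \<in> {1..N}" "r \<in> {1..M}" for i r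
    using nth_sorted_list_of_set_image_atLeastAtMost[OF mono that(2)] that(1) by simp
  have "f i r = f j s \<longleftrightarrow> i = j \<and> r = s" if "i \<in> {1..N}" "j \<in> {1..N}" "r \<in> {1..M}" "s \<in> {1..M}"
    for i j r s
    using block_offset_eq_iff[OF that(3,4)] inj_onD[OF assms(2) _ that(1,2)] by (auto simp: f_def)
  then have disjoint: "disjoint_family_on (\<lambda>i. f i ` {1..M}) (set [1..<N + 1])"
    unfolding disjoint_family_on_def set_upt_Suc_atLeastAtMost by blast
  have "run k (\<lambda>u. {} \<union> (\<Union>i\<in>set [1..<N + 1]. embed_config (f i) (w i) (init_config M) u))
      (concat (map (\<lambda>i. embed_firings (\<lambda>r. sorted_list_of_set (C (w i)) ! (r - 1)) (w i) (Fs i))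
                   [1..<N + 1]))
    = Some (\<lambda>u. {} \<union> (\<Union>i\<in>set [1..<N + 1]. embed_config (f i) (w i) (D i) u))"
    by (rule run_embed_config_blocks[OF _ _ _ mono _ disjoint])
      (use assms(3) lookup in \<open>auto simp: init_config_def\<close>)
  moreover have "(\<lambda>u. {} \<union> (\<Union>i\<in>set [1..<N + 1]. embed_config (f i) (w i) (init_config M) u)) = C"
    unfolding set_upt_Suc_atLeastAtMost embed_config_init_config C by (simp add: f_def)
  ultimately show ?thesis
    unfolding set_upt_Suc_atLeastAtMost by (simp add: transport_relabel f_def)
qed

lemma vtx_add:
  assumes "0 < k" "i < k ^ (n + m)"
  shows "vtx k (n + m) i = vtx k n (i div k ^ m) @ vtx k m (i mod k ^ m)"
  using assms(2)
proof (induction n arbitrary: i)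
  case (Suc n)
  have "i mod k ^ (n + m) = k ^ m * (i div k ^ m mod k ^ n) + i mod k ^ m"
    using mod_mult2_eq[of i "k ^ m" "k ^ n"] by (simp add: power_add mult.commute)
  then have "i mod k ^ (n + m) div k ^ m = i div k ^ m mod k ^ n"
    using assms(1) by simp
  moreover have "i mod k ^ (n + m) mod k ^ m = i mod k ^ m"
    by (simp add: power_add mod_mod_cancel)
  moreover have "i div k ^ (n + m) = i div k ^ m div k ^ n"
    by (simp add: power_add div_mult2_eq mult.commute)
  ultimately show ?case
    using Suc.IH[of "i mod k ^ (n + m)"] assms(1) by simp
qed simp

lemma vtx_inj:
  assumes "0 < k" "i < k ^ p" "j < k ^ p" "vtx k p i = vtx k p j"
  shows "i = j"
  using assms(2-4)
proof (induction p arbitrary: i j)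
  case (Suc p)
  then have "i div k ^ p = j div k ^ p" "i mod k ^ p = j mod k ^ p"
    using assms(1) by auto
  then show ?case by (metis div_mult_mod_eq)
qed simp

lemma inj_on_vtx_pred:
  assumes "0 < k"
  shows "inj_on (\<lambda>i. vtx k p (i - 1)) {1..k ^ p}"
proof (rule inj_onI)
  fix i j assume "i \<in> {1..k ^ p}" "j \<in> {1..k ^ p}" "vtx k p (i - 1) = vtx k p (j - 1)"
  moreover from this have "i - 1 < k ^ p" "j - 1 < k ^ p" by auto
  ultimately show "i = j" using vtx_inj[OF assms, of "i - 1" p "j - 1"] by auto
qed

lemma stable_conf_of_seq:
  assumes "2 \<le> k"
  shows "stable k (conf_of_seq k p \<sigma>)"
  unfolding stable_def
proof
  fix u
  let ?X = "conf_of_seq k p \<sigma> u"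
  have "?X \<subseteq> (\<lambda>i. \<sigma> (i + 1)) ` {..<k ^ p}"
    by (auto simp: conf_of_seq_def)
  then have "finite ?X" by (rule finite_subset) simp
  moreover have "\<forall>a\<in>?X. \<forall>b\<in>?X. a = b"
    using vtx_inj[where k = k and p = p] assms by (auto simp: conf_of_seq_def)
  ultimately have "finite ?X" "card ?X \<le> 1"
    using card_le_Suc0_iff_eq by auto
  then show "finite ?X \<and> card ?X < k" using assms by simp
qed

lemma embed_config_conf_of_seq:
  "embed_config f w (conf_of_seq k p \<sigma>) u = {f (\<sigma> (l + 1)) | l. l < k ^ p \<and> u = w @ vtx k p l}"
proof -
  have "(take (length w) u = w \<and> drop (length w) u = v) \<longleftrightarrow> u = w @ v" for v
    by (metis append_eq_conv_conj)
  then show ?thesis by (auto simp: embed_config_def conf_of_seq_def)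
qed

lemma UN_block_offsets_conf_of_seq:
  "(\<Union>j\<in>{1..M}. (\<lambda>r. (r - 1) * M + j) ` conf_of_seq k n \<tau> u)
     = (\<Union>i\<in>{1..k ^ n}. if u = vtx k n (i - 1) then (\<lambda>r. (\<tau> i - 1) * M + r) ` {1..M} else {})"
proof (intro equalityI subsetI)
  fix x assume "x \<in> (\<Union>j\<in>{1..M}. (\<lambda>r. (r - 1) * M + j) ` conf_of_seq k n \<tau> u)"
  then obtain i j where "i < k ^ n" "u = vtx k n i" "j \<in> {1..M}" "x = (\<tau> (i + 1) - 1) * M + j"
    by (auto simp: conf_of_seq_def)
  then show "x \<in> (\<Union>i\<in>{1..k ^ n}. if u = vtx k n (i - 1) then (\<lambda>r. (\<tau> i - 1) * M + r) ` {1..M} else {})"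
    by (intro UN_I[of "i + 1"]) auto
next
  fix x assume "x \<in> (\<Union>i\<in>{1..k ^ n}. if u = vtx k n (i - 1) then (\<lambda>r. (\<tau> i - 1) * M + r) ` {1..M} else {})"
  then obtain i where i: "i \<in> {1..k ^ n}"
    and x: "x \<in> (if u = vtx k n (i - 1) then (\<lambda>r. (\<tau> i - 1) * M + r) ` {1..M} else {})"
    by (rule UN_E)
  then have "u = vtx k n (i - 1)" by (metis empty_iff)
  moreover obtain j where "j \<in> {1..M}" "x = (\<tau> i - 1) * M + j"
    using x calculation by (auto simp del: image_add_atLeastAtMost image_add_atLeastAtMost')
  moreover have "\<tau> i \<in> conf_of_seq k n \<tau> u"
    using i calculation(1) by (auto simp: conf_of_seq_def intro!: exI[of _ "i - 1"])
  ultimately show "x \<in> (\<Union>j\<in>{1..M}. (\<lambda>r. (r - 1) * M + j) ` conf_of_seq k n \<tau> u)"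
    by (intro UN_I[of j] image_eqI[of _ _ "\<tau> i"]) auto
qed

lemma UN_embed_config_conf_of_seq_inflation:
  assumes "0 < k"
  shows "(\<Union>i\<in>{1..k ^ n}. embed_config (\<lambda>r. (\<tau> i - 1) * k ^ m + r) (vtx k n (i - 1))
                                  (conf_of_seq k m (\<gamma> i)) u)
       = conf_of_seq k (n + m) (inflation (k ^ m) \<tau> \<gamma>) u"
    (is "?lhs = ?rhs")
proof (intro equalityI subsetI)
  fix x assume "x \<in> ?lhs"
  then obtain i l where i: "i \<in> {1..k ^ n}" and l: "l < k ^ m"
    and u: "u = vtx k n (i - 1) @ vtx k m l" and x: "x = (\<tau> i - 1) * k ^ m + \<gamma> i (l + 1)"
    by (auto simp: embed_config_conf_of_seq)
  define p where "p = (i - 1) * k ^ m + l"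
  have p: "p div k ^ m = i - 1" "p mod k ^ m = l" using l assms by (simp_all add: p_def)
  have "p < (i - 1) * k ^ m + k ^ m" using l by (simp add: p_def)
  also have "\<dots> = i * k ^ m" using i by (cases i) auto
  also have "\<dots> \<le> k ^ (n + m)" using i by (simp add: power_add)
  finally have "p < k ^ (n + m)" .
  moreover have "u = vtx k (n + m) p" using vtx_add[OF assms \<open>p < k ^ (n + m)\<close>] p u by simp
  moreover have "x = inflation (k ^ m) \<tau> \<gamma> (p + 1)" using x p i by (simp add: inflation_def)
  ultimately show "x \<in> ?rhs" unfolding conf_of_seq_def by blast
next
  fix x assume "x \<in> ?rhs"
  then obtain p where p: "p < k ^ (n + m)" and u: "u = vtx k (n + m) p"
    and x: "x = inflation (k ^ m) \<tau> \<gamma> (p + 1)"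
    by (auto simp: conf_of_seq_def)
  define i where "i = p div k ^ m + 1"
  have "p div k ^ m < k ^ n" using p by (simp add: power_add less_mult_imp_div_less)
  then have "i \<in> {1..k ^ n}" by (simp add: i_def)
  moreover have "p mod k ^ m < k ^ m" using assms by simp
  moreover have "u = vtx k n (i - 1) @ vtx k m (p mod k ^ m)"
    using vtx_add[OF assms p] u by (simp add: i_def)
  moreover have "x = (\<tau> i - 1) * k ^ m + \<gamma> i (p mod k ^ m + 1)"
    using x by (simp add: inflation_def i_def)
  ultimately show "x \<in> ?lhs"
    unfolding embed_config_conf_of_seq by blast
qed

theorem proposition4p1:
  fixes k n m :: nat and F :: "firing list" and Fs :: "nat \<Rightarrow> firing list"
    and \<tau> :: "nat \<Rightarrow> nat" and \<gamma> :: "nat \<Rightarrow> nat \<Rightarrow> nat"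
  assumes "k \<ge> 2"
    and "bij_betw \<tau> {1..k ^ n} {1..k ^ n}"
    and "strategy_result k n F \<tau>"
    and "\<And>i. i \<in> {1..k ^ n} \<Longrightarrow> bij_betw (\<gamma> i) {1..k ^ m} {1..k ^ m}"
    and "\<And>i. i \<in> {1..k ^ n} \<Longrightarrow> strategy_result k m (Fs i) (\<gamma> i)"
  shows "\<exists>C1 C2.
           run k (init_config (k ^ (n + m))) (f_bundle (k ^ n) (k ^ m) F) = Some C1 \<and>
           run k C1 (concat (map (\<lambda>i. transport (vtx k n (i - 1))
                                         (relabel (C1 (vtx k n (i - 1))) (Fs i)))
                               [1..<k ^ n + 1])) = Some C2 \<and>
           stable k C2 \<and>
           C2 = conf_of_seq k (n + m) (inflation (k ^ m) \<tau> \<gamma>)"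
proof -
  have k: "0 < k" using assms(1) by simp
  define C1 where "C1 = (\<lambda>u. \<Union>j\<in>{1..k ^ m}. (\<lambda>r. (r - 1) * k ^ m + j) ` conf_of_seq k n \<tau> u)"
  have "run k (init_config (k ^ n)) F = Some (conf_of_seq k n \<tau>)"
    using assms(3) by (simp add: strategy_result_def)
  then have bundle_run: "run k (init_config (k ^ (n + m))) (f_bundle (k ^ n) (k ^ m) F) = Some C1"
    using run_f_bundle[of k "k ^ n" F _ "k ^ m"] k by (simp add: C1_def power_add)
  have "inj_on (\<lambda>i. vtx k n (i - 1)) {1..k ^ n}"
    by (rule inj_on_vtx_pred[OF k])
  moreover have "inj_on (\<lambda>i. \<tau> i - 1) {1..k ^ n}"
    using assms(2) by (intro inj_on_diff_1) (auto simp: bij_betw_def)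
  moreover have "run k (init_config (k ^ m)) (Fs i) = Some (conf_of_seq k m (\<gamma> i))" if "i \<in> {1..k ^ n}" for i
    using assms(5)[OF that] by (simp add: strategy_result_def)
  moreover have "C1 u = (\<Union>i\<in>{1..k ^ n}.
      if u = vtx k n (i - 1) then (\<lambda>r. (\<tau> i - 1) * k ^ m + r) ` {1..k ^ m} else {})" for u
    unfolding C1_def by (rule UN_block_offsets_conf_of_seq)
  ultimately have "run k C1 (concat (map (\<lambda>i. transport (vtx k n (i - 1))
                                         (relabel (C1 (vtx k n (i - 1))) (Fs i))) [1..<k ^ n + 1]))
      = Some (\<lambda>u. \<Union>i\<in>{1..k ^ n}. embed_config (\<lambda>r. (\<tau> i - 1) * k ^ m + r) (vtx k n (i - 1))
                                              (conf_of_seq k m (\<gamma> i)) u)"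
    by (rule run_transported_strategies)
  moreover have "(\<lambda>u. \<Union>i\<in>{1..k ^ n}. embed_config (\<lambda>r. (\<tau> i - 1) * k ^ m + r) (vtx k n (i - 1))
                                              (conf_of_seq k m (\<gamma> i)) u)
      = conf_of_seq k (n + m) (inflation (k ^ m) \<tau> \<gamma>)"
    using UN_embed_config_conf_of_seq_inflation[OF k] by (rule ext)
  ultimately have "run k C1 (concat (map (\<lambda>i. transport (vtx k n (i - 1))
                                         (relabel (C1 (vtx k n (i - 1))) (Fs i))) [1..<k ^ n + 1]))
      = Some (conf_of_seq k (n + m) (inflation (k ^ m) \<tau> \<gamma>))"
    by simp
  with bundle_run show ?thesis
    using stable_conf_of_seq[OF assms(1)] by blast
qed

end
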